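(* Let $G$ be a group and $A$ a set with at least two elements. Let $n \geq 2$ be an integer such that there is $g \in G$ whose order is greater than $n$ (possibly infinite). Then there exists a lazy cellular automaton $\tau : A^G \to A^G$ with $\mathrm{ord}(\tau) = n$.
   Context: $A^G$ is the set of maps $G \to A$ with shift action $(g\cdot x)(h) := x(hg)$. A cellular automaton is a map $\tau : A^G \to A^G$ with a finite $S \subseteq G$ and $\mu : A^S \to A$ such that $\tau(x)(g) = \mu((g\cdot x)|_S)$. $\tau$ is lazy if there is such a local defining map $\mu : A^S \to A$ with $e \in S$ ($e$ the identity of $G$) and $p \in A^S$ such that for all $z \in A^S$: $\mu(z) = z(e)$ iff $z \neq p$. $\tau^k$ is the $k$-fold composition, $\tau^0$ the identity; $\mathrm{ord}(\tau) := |\{\tau^k : k \in \mathbb{N}\}|$, $\mathbb{N}=\{0,1,\dots\}$. The order of $g \in G$ is the least $m \ge 1$ with $g^m = e$, or $\infty$ if none exists. *)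

theory Defs
  imports Main "HOL-Library.Extended_Nat" "HOL-Library.FuncSet"
begin

text \<open>The group G is written additively (type class group_add, not necessarily
commutative): identity 0, product g h written g + h.\<close>

definition shift :: "'g::group_add \<Rightarrow> ('g \<Rightarrow> 'a) \<Rightarrow> ('g \<Rightarrow> 'a)" where
  "shift g x = (\<lambda>h. x (h + g))"

definition gpow :: "'g::group_add \<Rightarrow> nat \<Rightarrow> 'g" where
  "gpow g m = ((\<lambda>h. h + g) ^^ m) 0"

definition elem_order :: "'g::group_add \<Rightarrow> enat" where
  "elem_order g = (if \<exists>m. m \<ge> 1 \<and> gpow g m = 0
                   then enat (LEAST m. m \<ge> 1 \<and> gpow g m = 0) else \<infinity>)"

text \<open>Elements of A^S are represented as functions vanishing (= undefined) outside S.\<close>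
definition local_rule ::
  "(('g::group_add \<Rightarrow> 'a) \<Rightarrow> ('g \<Rightarrow> 'a)) \<Rightarrow> 'g set \<Rightarrow> (('g \<Rightarrow> 'a) \<Rightarrow> 'a) \<Rightarrow> bool" where
  "local_rule \<tau> S \<mu> \<longleftrightarrow> finite S \<and> (\<forall>x g. \<tau> x g = \<mu> (restrict (shift g x) S))"

definition cellular_automaton :: "(('g::group_add \<Rightarrow> 'a) \<Rightarrow> ('g \<Rightarrow> 'a)) \<Rightarrow> bool" where
  "cellular_automaton \<tau> \<longleftrightarrow> (\<exists>S \<mu>. local_rule \<tau> S \<mu>)"

definition lazy_ca :: "(('g::group_add \<Rightarrow> 'a) \<Rightarrow> ('g \<Rightarrow> 'a)) \<Rightarrow> bool" where
  "lazy_ca \<tau> \<longleftrightarrow> (\<exists>S \<mu> p. local_rule \<tau> S \<mu> \<and> 0 \<in> S \<and> p \<in> extensional S \<and>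
      (\<forall>z \<in> extensional S. \<mu> z = z 0 \<longleftrightarrow> z \<noteq> p))"

definition ca_ord :: "('c \<Rightarrow> 'c) \<Rightarrow> nat" where
  "ca_ord \<tau> = card {\<tau> ^^ k | k. True}"

end

theory Submission
  imports Defs
begin

text \<open>Take g of order greater than n and put N = g^n.  The lazy automaton with
neighbourhood {e, g, N} and pattern (b, a, b) turns a cell c from b into a exactly
when g c carries a and N c carries b.  Started from the configuration with a single a
at N, the a spreads one cell per step along g^(n-1), ..., g and stops before e,
because N itself carries a; so the first n iterates are distinct.  Conversely a cell
firing at time t forces firings at g c, g^2 c, ... at the earlier times, and going
back n - 1 steps shows that N c already carried a; hence nothing fires from time
n - 1 on, and the iterates stabilise there.\<close>

lemma gpow_0 [simp]: "gpow g 0 = 0"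
  by (simp add: gpow_def)

lemma gpow_Suc: "gpow g (Suc m) = gpow g m + g"
  by (simp add: gpow_def)

lemma gpow_1 [simp]: "gpow g (Suc 0) = g"
  by (simp add: gpow_def)

lemma gpow_add: "gpow g (i + j) = gpow g i + gpow g j"
  by (induction j) (simp_all add: gpow_Suc add.assoc)

lemma gpow_Suc': "gpow g (Suc m) = g + gpow g m"
  using gpow_add[of g "Suc 0" m] by simp

lemma gpow_neq_0:
  assumes "0 < m" "enat m < elem_order g"
  shows "gpow g m \<noteq> 0"
proof
  assume "gpow g m = 0"
  with assms(1) have "\<exists>m. m \<ge> 1 \<and> gpow g m = 0"
    by (intro exI[of _ m]) simp
  moreover have "(LEAST m. m \<ge> 1 \<and> gpow g m = 0) \<le> m"
    using \<open>gpow g m = 0\<close> assms(1) by (intro Least_le) simp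
  ultimately show False
    using assms(2) by (simp add: elem_order_def)
qed

lemma gpow_neq:
  assumes "i < j" "enat (j - i) < elem_order g"
  shows "gpow g i \<noteq> gpow g j"
proof
  assume "gpow g i = gpow g j"
  also have "gpow g j = gpow g i + gpow g (j - i)"
    using gpow_add[of g i "j - i"] assms(1) by simp
  finally have "gpow g (j - i) = 0"
    by (metis add.right_neutral add_left_cancel)
  with gpow_neq_0[of "j - i" g] assms show False by simp
qed

definition lazy_rule :: "'g::group_add set \<Rightarrow> ('g \<Rightarrow> 'a) \<Rightarrow> 'a \<Rightarrow> ('g \<Rightarrow> 'a) \<Rightarrow> 'g \<Rightarrow> 'a" where
  "lazy_rule S p a x h = (if restrict (shift h x) S = p then a else x h)"

lemma lazy_ca_lazy_rule:
  assumes "finite S" "0 \<in> S" "p \<in> extensional S" "p 0 \<noteq> a"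
  shows "lazy_ca (lazy_rule S p a)"
  unfolding lazy_ca_def
proof (intro exI conjI)
  let ?\<mu> = "\<lambda>z. if z = p then a else z 0"
  show "local_rule (lazy_rule S p a) S ?\<mu>"
    using assms(1,2) by (simp add: local_rule_def lazy_rule_def shift_def)
  show "\<forall>z \<in> extensional S. (?\<mu> z = z 0) = (z \<noteq> p)"
    using assms(4) by auto
qed (use assms in auto)

lemma lazy_ca_imp_cellular_automaton: "lazy_ca \<tau> \<Longrightarrow> cellular_automaton \<tau>"
  unfolding lazy_ca_def cellular_automaton_def by blast

lemma ca_ord_eqI:
  assumes fixed: "f ^^ Suc m = f ^^ m" and inj: "inj_on (\<lambda>k. f ^^ k) {..m}"
  shows "ca_ord f = Suc m"
proof -
  have stable: "f ^^ k = f ^^ m" if "m \<le> k" for k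
    using that by (induction k rule: dec_induct) (use fixed in simp_all)
  have "{f ^^ k | k. True} = (\<lambda>k. f ^^ k) ` {..m}"
  proof (intro equalityI subsetI)
    fix h
    assume "h \<in> {f ^^ k | k. True}"
    then obtain k where "h = f ^^ k" by blast
    then have "h = f ^^ min k m"
      using stable[of k] by (simp add: min_def)
    then show "h \<in> (\<lambda>k. f ^^ k) ` {..m}" by auto
  qed auto
  then show ?thesis
    using card_image[OF inj] by (simp add: ca_ord_def)
qed

locale spreading =
  fixes g :: "'g::group_add" and n :: nat and a b :: 'a
  assumes a_neq_b: "a \<noteq> b"
begin

definition fires :: "('g \<Rightarrow> 'a) \<Rightarrow> 'g \<Rightarrow> bool" where
  "fires y c \<longleftrightarrow> y c = b \<and> y (g + c) = a \<and> y (gpow g n + c) = b"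

definition spread :: "('g \<Rightarrow> 'a) \<Rightarrow> 'g \<Rightarrow> 'a" where
  "spread y c = (if fires y c then a else y c)"

lemma spread_eq_lazy_rule:
  assumes "g \<noteq> 0" "gpow g n \<noteq> 0" "gpow g n \<noteq> g"
  shows "spread =
    lazy_rule {0, g, gpow g n} (restrict (\<lambda>s. if s = g then a else b) {0, g, gpow g n}) a"
proof (intro ext)
  fix y c
  let ?S = "{0, g, gpow g n}" and ?p = "restrict (\<lambda>s. if s = g then a else b) {0, g, gpow g n}"
  have "restrict (shift c y) ?S = ?p \<longleftrightarrow> fires y c"
    using assms by (auto simp: fires_def shift_def restrict_def fun_eq_iff)
  then show "spread y c = lazy_rule ?S ?p a y c"
    by (simp add: spread_def lazy_rule_def)
qed

lemma spread_keeps_a: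
  assumes "(spread ^^ t) y c = a" "t \<le> u"
  shows "(spread ^^ u) y c = a"
  using assms(2,1) by (induction u rule: dec_induct) (auto simp: spread_def)

text \<open>Cell c and N c already carried b at time t, since a is never overwritten; so
g c must have switched to a at time t, for otherwise c would have fired then.\<close>
lemma fires_backward:
  assumes "fires ((spread ^^ Suc t) y) c"
  shows "fires ((spread ^^ t) y) (g + c)"
proof -
  define Y where "Y = (spread ^^ t) y"
  have fires_next: "spread Y c = b" "spread Y (g + c) = a" "spread Y (gpow g n + c) = b"
    using assms by (simp_all add: Y_def fires_def)
  then have "\<not> fires Y c" "Y c = b" "Y (gpow g n + c) = b"
    using a_neq_b by (auto simp: spread_def split: if_splits)
  then have "Y (g + c) \<noteq> a"
    by (auto simp: fires_def)
  with fires_next(2) show ?thesis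
    by (auto simp: Y_def spread_def split: if_splits)
qed

lemma fires_backward_gpow:
  assumes "fires ((spread ^^ (t + j)) y) c"
  shows "fires ((spread ^^ t) y) (gpow g j + c)"
  using assms
proof (induction j arbitrary: c)
  case (Suc j)
  then have "fires ((spread ^^ t) y) (gpow g j + (g + c))"
    using fires_backward by simp
  then show ?case
    by (simp add: gpow_Suc add.assoc)
qed simp

lemma not_fires_at_n_minus_1:
  assumes "0 < n"
  shows "\<not> fires ((spread ^^ (n - 1)) y) c"
proof
  assume fire: "fires ((spread ^^ (n - 1)) y) c"
  then have "fires y (gpow g (n - 1) + c)"
    using fires_backward_gpow[of 0 "n - 1"] by simp
  moreover have "g + (gpow g (n - 1) + c) = gpow g n + c"
    using assms gpow_Suc'[of g "n - 1"] by (simp add: add.assoc)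
  ultimately have "(spread ^^ 0) y (gpow g n + c) = a"
    by (simp add: fires_def)
  then have "(spread ^^ (n - 1)) y (gpow g n + c) = a"
    by (rule spread_keeps_a) simp
  with fire a_neq_b show False
    by (simp add: fires_def)
qed

lemma funpow_spread_stable:
  assumes "0 < n"
  shows "spread ^^ Suc (n - 1) = spread ^^ (n - 1)"
  using not_fires_at_n_minus_1[OF assms] by (auto simp: spread_def fun_eq_iff)

definition segment :: "nat \<Rightarrow> 'g \<Rightarrow> 'a" where
  "segment k c = (if c \<in> gpow g ` {k..n} then a else b)"

end

locale spreading_order = spreading +
  assumes order_gt: "enat n < elem_order g"
begin

lemma gpow_neq_within_order:
  assumes "i < j" "j - i \<le> n"
  shows "gpow g i \<noteq> gpow g j"
proof (rule gpow_neq[OF assms(1)])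
  have "enat (j - i) \<le> enat n"
    using assms(2) by simp
  from this order_gt show "enat (j - i) < elem_order g"
    by (rule le_less_trans)
qed

lemma gpow_notin_gpow_image:
  assumes "k < l"
  shows "gpow g k \<notin> gpow g ` {l..n}"
proof
  assume "gpow g k \<in> gpow g ` {l..n}"
  then obtain j where "j \<in> {l..n}" "gpow g k = gpow g j" by blast
  moreover have "j - k \<le> n"
    using \<open>j \<in> {l..n}\<close> by auto
  ultimately show False
    using assms gpow_neq_within_order[of k j] by simp
qed

lemma fires_segment_iff:
  assumes "0 < k" "k < n"
  shows "fires (segment (Suc k)) c \<longleftrightarrow> c = gpow g k"
proof
  assume "fires (segment (Suc k)) c"
  then obtain j where j: "j \<in> {Suc k..n}" "g + c = gpow g j" "c \<notin> gpow g ` {Suc k..n}"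
    using a_neq_b by (auto simp: fires_def segment_def split: if_splits)
  then have "c = gpow g (j - 1)"
    using gpow_Suc'[of g "j - 1"] by simp
  moreover have "j - 1 \<notin> {Suc k..n}"
    using j(3) \<open>c = gpow g (j - 1)\<close> by blast
  with j(1) have "j - 1 = k"
    by auto
  with \<open>c = gpow g (j - 1)\<close> show "c = gpow g k"
    by simp
next
  assume c: "c = gpow g k"
  have "gpow g (n + k) \<notin> gpow g ` {Suc k..n}"
  proof
    assume "gpow g (n + k) \<in> gpow g ` {Suc k..n}"
    then obtain j where "j \<in> {Suc k..n}" "gpow g j = gpow g (n + k)" by auto
    moreover have "j < n + k" "n + k - j \<le> n"
      using assms \<open>j \<in> {Suc k..n}\<close> by auto
    ultimately show False
      using gpow_neq_within_order[of j "n + k"] by simp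
  qed
  moreover note gpow_notin_gpow_image[of k "Suc k"]
  ultimately show "fires (segment (Suc k)) c"
    using assms by (auto simp: c fires_def segment_def gpow_Suc'[symmetric] gpow_add[symmetric])
qed

lemma spread_segment:
  assumes "0 < k" "k < n"
  shows "spread (segment (Suc k)) = segment k"
proof
  fix c
  have "gpow g ` {k..n} = insert (gpow g k) (gpow g ` {Suc k..n})"
    using assms atLeastAtMost_insertL[of k n] by (metis image_insert less_imp_le)
  then show "spread (segment (Suc k)) c = segment k c"
    using fires_segment_iff[OF assms] by (auto simp: spread_def segment_def)
qed

lemma funpow_spread_segment:
  assumes "t < n"
  shows "(spread ^^ t) (segment n) = segment (n - t)"
  using assms
proof (induction t)
  case (Suc t)
  then have "(spread ^^ Suc t) (segment n) = spread (segment (Suc (n - Suc t)))"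
    by (simp add: Suc_diff_Suc)
  also have "\<dots> = segment (n - Suc t)"
    using Suc.prems by (intro spread_segment) auto
  finally show ?case .
qed simp

lemma segment_neq:
  assumes "k < l" "l \<le> n"
  shows "segment k \<noteq> segment l"
proof
  assume "segment k = segment l"
  then have "segment l (gpow g k) = segment k (gpow g k)" by simp
  moreover have "gpow g k \<in> gpow g ` {k..n}"
    using assms by auto
  moreover note gpow_notin_gpow_image[OF assms(1)]
  ultimately show False
    using a_neq_b assms by (simp add: segment_def)
qed

lemma inj_on_funpow_spread:
  assumes "0 < n"
  shows "inj_on (\<lambda>t. spread ^^ t) {..n - 1}"
proof (rule linorder_inj_onI')
  fix i j
  assume "i \<in> {..n - 1}" "j \<in> {..n - 1}" "i < j"
  with assms have "i < n" "j < n" "n - j < n - i"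
    by auto
  then have "(spread ^^ j) (segment n) \<noteq> (spread ^^ i) (segment n)"
    using segment_neq[of "n - j" "n - i"] by (simp add: funpow_spread_segment)
  then show "spread ^^ i \<noteq> spread ^^ j"
    by metis
qed

lemma lazy_ca_spread:
  assumes "2 \<le> n"
  shows "lazy_ca spread"
proof -
  have "g \<noteq> 0" "gpow g n \<noteq> 0" "gpow g n \<noteq> g"
    using assms gpow_neq_within_order[of 0 "Suc 0"] gpow_neq_within_order[of 0 n]
      gpow_neq_within_order[of "Suc 0" n]
    by auto
  then show ?thesis
    by (subst spread_eq_lazy_rule) (auto intro!: lazy_ca_lazy_rule simp: a_neq_b[symmetric])
qed

lemma ca_ord_spread:
  assumes "0 < n"
  shows "ca_ord spread = n"
  using ca_ord_eqI[OF funpow_spread_stable[OF assms] inj_on_funpow_spread[OF assms]] assms by simp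

end

theorem corollary4:
  fixes n :: nat
  assumes "\<exists>a b :: 'a. a \<noteq> b"
    and "n \<ge> 2"
    and "\<exists>g :: 'g::group_add. enat n < elem_order g"
  shows "\<exists>\<tau> :: ('g \<Rightarrow> 'a) \<Rightarrow> ('g \<Rightarrow> 'a). cellular_automaton \<tau> \<and> lazy_ca \<tau> \<and> ca_ord \<tau> = n"
proof -
  obtain a b :: 'a where "a \<noteq> b" using assms(1) by blast
  moreover obtain g :: 'g where "enat n < elem_order g" using assms(3) by blast
  ultimately interpret spreading_order g n a b
    by unfold_locales
  have "lazy_ca spread" "ca_ord spread = n"
    using assms(2) by (simp_all add: lazy_ca_spread ca_ord_spread)
  then show ?thesis
    using lazy_ca_imp_cellular_automaton by blast
qed

end
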